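(* Let $\mathcal{D}_\varphi\in\Delta(\Sigma^V)$ be an identity-independent signaling scheme with finite signal space $\Sigma\subset[0,1]$. Then it is persuasive if and only if (i) $\Delta_\theta=0$ for every $\theta\in\Sigma$ with $\theta>0$, and (ii) if $0\in\Sigma$, then $\Delta_0\ge0$.
   Context: Setting. $V$ is a finite set of $n$ task types and $W=(W_{u,v})_{u,v\in V}$ is a symmetric matrix with entries in $[0,1]$ and $W_{v,v}=1$; $N(v)=\{v'\ne v: W_{v,v'}>0\}$. There are $n$ agents; the type profile $t=(t_1,\dots,t_n)$ is a uniformly random bijection $[n]\to V$. An identity-independent signaling scheme is given by a distribution $\mathcal{D}_\varphi$ on $\Sigma^V$: $s=(s_v)_{v\in V}\sim\mathcal{D}_\varphi$ is drawn independently of $t$ and agent $i$ privately receives $s_{t_i}$. For agent $i$, a signal $\theta\in\Sigma$ with $\Pr[s_{t_i}=\theta]>0$ and $x\ge0$, let $Q_i(x\mid\theta)=\mathbb{E}\big[x+\sum_{v'\neq t_i}W_{t_i,v'}s_{v'}\,\big|\,s_{t_i}=\theta\big]$ (over the joint law of $t,s$). The scheme is persuasive if for every agent $i$ and every such $\theta$: $Q_i(\theta\mid\theta)\ge1$ and $\theta=\min\{x\ge0:Q_i(x\mid\theta)\ge1\}$. Slack: for $\theta\in\Sigma$, $\mathrm{Contrib}_\theta=\mathbb{E}_{s\sim\mathcal{D}_\varphi}\big[\sum_{v\in V}\mathbf 1\{s_v=\theta\}\sum_{v'\in N(v)}W_{v,v'}s_{v'}\big]$, $\mathrm{Num}_\theta=\mathbb{E}_{s\sim\mathcal{D}_\varphi}\big[\sum_{v\in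 V}\mathbf 1\{s_v=\theta\}\big]$, and $\Delta_\theta=\mathrm{Contrib}_\theta-(1-\theta)\mathrm{Num}_\theta$. *)

theory Defs
  imports "HOL-Probability.Probability"
begin

text \<open>Task types: a finite type 'v (the set V). Agents: a finite type 'i with
  CARD('i) = CARD('v) (the n agents).\<close>

definition joint :: "('v::finite \<Rightarrow> real) pmf \<Rightarrow> (('i::finite \<Rightarrow> 'v) \<times> ('v \<Rightarrow> real)) pmf" where
  "joint D = pair_pmf (pmf_of_set {t. bij t}) D"

definition Qval :: "('v::finite \<Rightarrow> real) pmf \<Rightarrow> ('v \<Rightarrow> 'v \<Rightarrow> real) \<Rightarrow> 'i::finite \<Rightarrow> real \<Rightarrow> real \<Rightarrow> real" where
  "Qval D W i \<theta> x = measure_pmf.expectation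
      (cond_pmf (joint D :: (('i \<Rightarrow> 'v) \<times> ('v \<Rightarrow> real)) pmf) {(t, s). s (t i) = \<theta>})
      (\<lambda>(t, s). x + (\<Sum>v'\<in>UNIV - {t i}. W (t i) v' * s v'))"

definition persuasive :: "('v::finite \<Rightarrow> real) pmf \<Rightarrow> ('v \<Rightarrow> 'v \<Rightarrow> real) \<Rightarrow> 'i::finite itself \<Rightarrow> bool" where
  "persuasive D W (_ :: 'i itself) \<longleftrightarrow>
     (\<forall>(i::'i) \<theta>. measure_pmf.prob (joint D :: (('i \<Rightarrow> 'v) \<times> ('v \<Rightarrow> real)) pmf) {(t, s). s (t i) = \<theta>} > 0 \<longrightarrow>
        Qval D W i \<theta> \<theta> \<ge> 1 \<and> \<theta> = (LEAST x. 0 \<le> x \<and> 1 \<le> Qval D W i \<theta> x))"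

definition Nbr :: "('v \<Rightarrow> 'v \<Rightarrow> real) \<Rightarrow> 'v \<Rightarrow> 'v set" where
  "Nbr W v = {v'. v' \<noteq> v \<and> W v v' > 0}"

definition Contrib :: "('v::finite \<Rightarrow> real) pmf \<Rightarrow> ('v \<Rightarrow> 'v \<Rightarrow> real) \<Rightarrow> real \<Rightarrow> real" where
  "Contrib D W \<theta> = measure_pmf.expectation D
     (\<lambda>s. \<Sum>v\<in>UNIV. (if s v = \<theta> then 1 else 0) * (\<Sum>v'\<in>Nbr W v. W v v' * s v'))"

definition Num :: "('v::finite \<Rightarrow> real) pmf \<Rightarrow> real \<Rightarrow> real" where
  "Num D \<theta> = measure_pmf.expectation D (\<lambda>s. \<Sum>v\<in>UNIV. if s v = \<theta> then 1 else 0)"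

definition Slack :: "('v::finite \<Rightarrow> real) pmf \<Rightarrow> ('v \<Rightarrow> 'v \<Rightarrow> real) \<Rightarrow> real \<Rightarrow> real" where
  "Slack D W \<theta> = Contrib D W \<theta> - (1 - \<theta>) * Num D \<theta>"

end

theory Submission
  imports Defs
begin

(* Because the type profile is a uniform bijection independent of s, the type t_i of every agent
   is uniform on V; conditioning on s_{t_i} = \<theta> therefore weights each task v by 1{s_v = \<theta>},
   and Q_i(x | \<theta>) = x + Contrib_\<theta> / Num_\<theta> for every agent i.  The least x \<ge> 0 with
   Q_i(x | \<theta>) \<ge> 1 is max 0 (1 - Contrib_\<theta> / Num_\<theta>), and \<theta> equals it exactly when
   \<Delta>_\<theta> = 0 (for \<theta> > 0) or \<Delta>_0 \<ge> 0 (for \<theta> = 0).  Signals that are never sent have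
   Num_\<theta> = Contrib_\<theta> = 0. *)

lemma sum_pos_iff_ex_pos:
  fixes f :: "'a \<Rightarrow> real"
  assumes "finite A" and "\<And>x. x \<in> A \<Longrightarrow> 0 \<le> f x"
  shows "0 < sum f A \<longleftrightarrow> (\<exists>x\<in>A. 0 < f x)"
  using assms sum_nonneg_eq_0_iff[of A f] sum_nonneg[of A f] by (auto simp: order.strict_iff_order)

lemma expectation_pos_iff_finite:
  fixes p :: "'a pmf" and f :: "'a \<Rightarrow> real"
  assumes fin: "finite (set_pmf p)" and nonneg: "\<And>x. x \<in> set_pmf p \<Longrightarrow> 0 \<le> f x"
  shows "0 < measure_pmf.expectation p f \<longleftrightarrow> (\<exists>x\<in>set_pmf p. 0 < f x)"
proof -
  have "measure_pmf.expectation p f = (\<Sum>x\<in>set_pmf p. f x * pmf p x)"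
    by (rule integral_measure_pmf_real[OF fin]) simp
  moreover have "\<forall>x\<in>set_pmf p. 0 \<le> f x * pmf p x"
    using nonneg by simp
  ultimately show ?thesis
    using fin by (simp add: sum_pos_iff_ex_pos zero_less_mult_iff pmf_positive)
qed

lemma expectation_cond_pmf:
  fixes p :: "'a pmf" and f :: "'a \<Rightarrow> real"
  assumes fin: "finite (set_pmf p)" and pos: "measure_pmf.prob p A > 0"
  shows "measure_pmf.expectation (cond_pmf p A) f
       = measure_pmf.expectation p (\<lambda>x. indicator A x * f x) / measure_pmf.prob p A"
proof -
  have ne: "set_pmf p \<inter> A \<noteq> {}"
    using pos measure_pmf_zero_iff[of p A] by auto
  have "measure_pmf.expectation (cond_pmf p A) f
      = (\<Sum>x\<in>set_pmf p. pmf (cond_pmf p A) x *\<^sub>R f x)"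
    by (rule integral_measure_pmf[OF fin]) (use ne in auto)
  also have "\<dots> = (\<Sum>x\<in>set_pmf p. pmf p x *\<^sub>R (indicator A x * f x)) / measure_pmf.prob p A"
    by (auto simp: pmf_cond[OF ne] sum_divide_distrib indicator_def intro!: sum.cong)
  also have "\<dots> = measure_pmf.expectation p (\<lambda>x. indicator A x * f x) / measure_pmf.prob p A"
    by (subst integral_measure_pmf[OF fin]) auto
  finally show ?thesis .
qed

lemma map_pmf_apply_uniform_bij:
  assumes "CARD('i::finite) = CARD('v::finite)"
  shows "map_pmf (\<lambda>t. t i) (pmf_of_set {t::'i \<Rightarrow> 'v. bij t}) = pmf_of_set UNIV"
proof -
  define U where "U = pmf_of_set {t::'i \<Rightarrow> 'v. bij t}"
  define \<mu> where "\<mu> = map_pmf (\<lambda>t. t i) U"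
  have "{t::'i \<Rightarrow> 'v. bij t} \<noteq> {}"
    using finite_same_card_bij[of "UNIV::'i set" "UNIV::'v set"] assms by auto
  then have U_invariant: "map_pmf ((\<circ>) \<sigma>) U = U" if "bij \<sigma>" for \<sigma> :: "'v \<Rightarrow> 'v"
    unfolding U_def
    by (intro map_pmf_of_set_bij_betw bij_betw_byWitness[where f' = "(\<circ>) (inv \<sigma>)"])
       (use that in \<open>auto simp: fun_eq_iff bij_is_inj bij_is_surj bij_comp bij_imp_bij_inv
          surj_f_inv_f\<close>)
  have pmf_const: "pmf \<mu> w = pmf \<mu> v" for v w
  proof -
    let ?\<sigma> = "Transposition.transpose v w"
    have "map_pmf ?\<sigma> \<mu> = map_pmf (\<lambda>t. t i) (map_pmf ((\<circ>) ?\<sigma>) U)"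
      unfolding \<mu>_def by (simp add: pmf.map_comp o_def)
    also have "\<dots> = \<mu>"
      unfolding \<mu>_def U_invariant[OF bij_transpose] ..
    finally have "map_pmf ?\<sigma> \<mu> = \<mu>" .
    then show ?thesis
      using pmf_map_inj'[of ?\<sigma> \<mu> v] by simp
  qed
  have "1 = (\<Sum>w\<in>UNIV. pmf \<mu> w)"
    by (rule sum_pmf_eq_1[symmetric]) auto
  also have "\<dots> = (\<Sum>w::'v\<in>UNIV. pmf \<mu> v)" for v
    by (rule sum.cong[OF refl pmf_const])
  finally have "pmf \<mu> v = 1 / CARD('v)" for v
    by (simp add: field_simps)
  then show ?thesis
    unfolding \<mu>_def U_def by (intro pmf_eqI) simp
qed

lemma Least_nonneg_add_ge_one: "(LEAST x::real. 0 \<le> x \<and> 1 \<le> x + c) = max 0 (1 - c)"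
  by (rule Least_equality) auto

lemma eq_max_0_iff_slack:
  fixes \<theta> C N :: real
  assumes "0 < N" and "0 \<le> \<theta>"
  shows "\<theta> = max 0 (1 - C / N)
     \<longleftrightarrow> (0 < \<theta> \<longrightarrow> C - (1 - \<theta>) * N = 0) \<and> (\<theta> = 0 \<longrightarrow> 0 \<le> C - (1 - \<theta>) * N)"
proof (cases "\<theta> = 0")
  case True
  then show ?thesis
    using assms by (auto simp: max_def field_simps)
next
  case False
  then have "0 < \<theta>"
    using assms by simp
  then have "\<theta> = max 0 (1 - C / N) \<longleftrightarrow> \<theta> = 1 - C / N"
    by (auto simp: max_def)
  also have "\<dots> \<longleftrightarrow> C - (1 - \<theta>) * N = 0"
    using assms by (auto simp: field_simps)
  finally show ?thesis
    using \<open>0 < \<theta>\<close> by simp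
qed

lemma expectation_joint_apply:
  fixes D :: "('v::finite \<Rightarrow> real) pmf" and f :: "'v \<Rightarrow> ('v \<Rightarrow> real) \<Rightarrow> real" and i :: "'i::finite"
  assumes card: "CARD('i) = CARD('v)" and fin: "finite (set_pmf D)"
  shows "measure_pmf.expectation (joint D :: (('i \<Rightarrow> 'v) \<times> ('v \<Rightarrow> real)) pmf) (\<lambda>(t, s). f (t i) s)
       = measure_pmf.expectation D (\<lambda>s. \<Sum>v\<in>UNIV. f v s) / CARD('v)"
proof -
  have marginal: "map_pmf (\<lambda>(t, s). (t i, s)) (joint D :: (('i \<Rightarrow> 'v) \<times> ('v \<Rightarrow> real)) pmf)
      = pair_pmf (pmf_of_set UNIV) D"
    unfolding joint_def map_pair map_pmf_apply_uniform_bij[OF card] map_pmf_ident ..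
  have "measure_pmf.expectation (joint D :: (('i \<Rightarrow> 'v) \<times> ('v \<Rightarrow> real)) pmf) (\<lambda>(t, s). f (t i) s)
      = measure_pmf.expectation (pair_pmf (pmf_of_set UNIV) D) (\<lambda>(v, s). f v s)"
    unfolding marginal[symmetric] integral_map_pmf by (simp add: case_prod_unfold)
  also have "\<dots> = (\<Sum>v\<in>UNIV. measure_pmf.expectation D (f v)) / CARD('v)"
    unfolding pair_pmf_def
    by (subst pmf_expectation_bind_pmf_of_set)
       (auto simp: fin map_pmf_def[symmetric] integral_map_pmf sum_divide_distrib
          divide_inverse_commute sum_distrib_left)
  also have "\<dots> = measure_pmf.expectation D (\<lambda>s. \<Sum>v\<in>UNIV. f v s) / CARD('v)"
    by (subst Bochner_Integration.integral_sum) (auto intro: integrable_measure_pmf_finite fin)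
  finally show ?thesis .
qed

lemma prob_joint_signal:
  fixes D :: "('v::finite \<Rightarrow> real) pmf" and i :: "'i::finite"
  assumes "CARD('i) = CARD('v)" and "finite (set_pmf D)"
  shows "measure_pmf.prob (joint D :: (('i \<Rightarrow> 'v) \<times> ('v \<Rightarrow> real)) pmf) {(t, s). s (t i) = \<theta>}
       = Num D \<theta> / CARD('v)"
proof -
  let ?J = "joint D :: (('i \<Rightarrow> 'v) \<times> ('v \<Rightarrow> real)) pmf"
  have "measure_pmf.prob ?J {(t, s). s (t i) = \<theta>}
      = measure_pmf.expectation ?J (indicator {(t, s). s (t i) = \<theta>})"
    by simp
  also have "\<dots> = measure_pmf.expectation ?J (\<lambda>(t, s). if s (t i) = \<theta> then 1 else 0)"
    by (rule arg_cong[where f = "measure_pmf.expectation ?J"]) (auto simp: indicator_def)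
  also have "\<dots> = Num D \<theta> / CARD('v)"
    unfolding Num_def by (rule expectation_joint_apply[OF assms])
  finally show ?thesis .
qed

lemma Num_pos_iff:
  assumes "finite (set_pmf D)"
  shows "0 < Num D \<theta> \<longleftrightarrow> (\<exists>s\<in>set_pmf D. \<exists>v. s v = \<theta>)"
  unfolding Num_def
  by (subst expectation_pos_iff_finite[OF assms]) (auto intro: sum_nonneg simp: sum_pos_iff_ex_pos)

lemma Slack_unsent:
  assumes "\<forall>s\<in>set_pmf D. \<forall>v. s v \<noteq> \<theta>"
  shows "Slack D W \<theta> = 0"
proof -
  have "Num D \<theta> = 0" "Contrib D W \<theta> = 0"
    unfolding Num_def Contrib_def using assms by (auto intro!: integral_eq_zero_AE AE_pmfI)
  then show ?thesis
    by (simp add: Slack_def)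
qed

lemma sum_Nbr_eq_sum_others:
  fixes W :: "'v::finite \<Rightarrow> 'v \<Rightarrow> real"
  assumes "\<And>u v. 0 \<le> W u v"
  shows "(\<Sum>v'\<in>Nbr W v. W v v' * s v') = (\<Sum>v'\<in>UNIV - {v}. W v v' * s v')"
  by (rule sum.mono_neutral_left)
     (use assms in \<open>auto simp: Nbr_def order.strict_iff_order\<close>)

lemma Qval_eq:
  fixes D :: "('v::finite \<Rightarrow> real) pmf" and i :: "'i::finite"
  assumes card: "CARD('i) = CARD('v)" and fin: "finite (set_pmf D)"
    and W_nonneg: "\<And>u v. 0 \<le> W u v" and Num_pos: "0 < Num D \<theta>"
  shows "Qval D W i \<theta> x = x + Contrib D W \<theta> / Num D \<theta>"
proof -
  let ?J = "joint D :: (('i \<Rightarrow> 'v) \<times> ('v \<Rightarrow> real)) pmf"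
  let ?chosen = "\<lambda>v s. if s v = \<theta> then 1 else (0::real)"
  have prob: "measure_pmf.prob ?J {(t, s). s (t i) = \<theta>} = Num D \<theta> / CARD('v)"
    by (rule prob_joint_signal[OF card fin])
  have fin_J: "finite (set_pmf ?J)"
    using fin by (simp add: joint_def)
  have pos: "0 < measure_pmf.prob ?J {(t, s). s (t i) = \<theta>}"
    using Num_pos by (simp add: prob)
  have "Qval D W i \<theta> x = measure_pmf.expectation ?J
      (\<lambda>(t, s). ?chosen (t i) s * (x + (\<Sum>v'\<in>UNIV - {t i}. W (t i) v' * s v'))) / (Num D \<theta> / CARD('v))"
    unfolding Qval_def expectation_cond_pmf[OF fin_J pos] prob
    by (simp add: indicator_def of_bool_def case_prod_unfold)
  also have "\<dots> = measure_pmf.expectation D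
      (\<lambda>s. \<Sum>v\<in>UNIV. ?chosen v s * (x + (\<Sum>v'\<in>UNIV - {v}. W v v' * s v'))) / Num D \<theta>"
    using expectation_joint_apply[OF card fin,
        where f = "\<lambda>v s. ?chosen v s * (x + (\<Sum>v'\<in>UNIV - {v}. W v v' * s v'))" and i = i]
    by simp
  also have "\<dots> = measure_pmf.expectation D
      (\<lambda>s. x * (\<Sum>v\<in>UNIV. ?chosen v s) + (\<Sum>v\<in>UNIV. ?chosen v s * (\<Sum>v'\<in>Nbr W v. W v v' * s v'))) / Num D \<theta>"
    unfolding sum_Nbr_eq_sum_others[of W, OF W_nonneg]
    by (simp add: distrib_left sum.distrib sum_distrib_left mult.commute)
  also have "\<dots> = (x * Num D \<theta> + Contrib D W \<theta>) / Num D \<theta>"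
    unfolding Num_def Contrib_def
    by (subst Bochner_Integration.integral_add) (auto intro: integrable_measure_pmf_finite fin)
  finally show ?thesis
    using Num_pos by (simp add: field_simps)
qed

lemma persuasive_iff_Num_pos:
  fixes D :: "('v::finite \<Rightarrow> real) pmf"
  assumes card: "CARD('i::finite) = CARD('v)" and fin: "finite (set_pmf D)"
    and W_nonneg: "\<And>u v. 0 \<le> W u v"
  shows "persuasive D W TYPE('i)
     \<longleftrightarrow> (\<forall>\<theta>. 0 < Num D \<theta> \<longrightarrow> \<theta> = max 0 (1 - Contrib D W \<theta> / Num D \<theta>))"
proof -
  have "persuasive D W TYPE('i)
     \<longleftrightarrow> (\<forall>(i::'i) \<theta>. 0 < Num D \<theta> \<longrightarrow> \<theta> = max 0 (1 - Contrib D W \<theta> / Num D \<theta>))"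
    unfolding persuasive_def prob_joint_signal[OF card fin]
    by (intro iff_allI imp_cong)
       (auto simp: Qval_eq[OF card fin W_nonneg] Least_nonneg_add_ge_one zero_less_divide_iff)
  then show ?thesis
    by simp
qed

theorem lemma3p2:
  fixes D :: "('v::finite \<Rightarrow> real) pmf"
    and W :: "'v \<Rightarrow> 'v \<Rightarrow> real"
    and \<Sigma> :: "real set"
  assumes agents: "CARD('i::finite) = CARD('v)"
    and W_sym: "\<And>u v. W u v = W v u"
    and W_range: "\<And>u v. 0 \<le> W u v \<and> W u v \<le> 1"
    and W_diag: "\<And>v. W v v = 1"
    and Sigma_fin: "finite \<Sigma>"
    and Sigma_sub: "\<Sigma> \<subseteq> {0..1}"
    and D_supp: "\<And>s v. s \<in> set_pmf D \<Longrightarrow> s v \<in> \<Sigma>"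
  shows "persuasive D W TYPE('i) \<longleftrightarrow>
           ((\<forall>\<theta>\<in>\<Sigma>. \<theta> > 0 \<longrightarrow> Slack D W \<theta> = 0) \<and> (0 \<in> \<Sigma> \<longrightarrow> Slack D W 0 \<ge> 0))"
proof -
  have fin: "finite (set_pmf D)"
    by (rule finite_subset[of _ "PiE UNIV (\<lambda>_. \<Sigma>)"]) (auto simp: D_supp Sigma_fin finite_PiE)
  have W_nonneg: "\<And>u v. 0 \<le> W u v"
    using W_range by blast
  have signal_condition: "(0 < Num D \<theta> \<longrightarrow> \<theta> = max 0 (1 - Contrib D W \<theta> / Num D \<theta>))
      \<longleftrightarrow> (\<theta> \<in> \<Sigma> \<longrightarrow> (0 < \<theta> \<longrightarrow> Slack D W \<theta> = 0) \<and> (\<theta> = 0 \<longrightarrow> 0 \<le> Slack D W \<theta>))" for \<theta>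
  proof (cases "\<exists>s\<in>set_pmf D. \<exists>v. s v = \<theta>")
    case True
    then have "0 < Num D \<theta>" and "\<theta> \<in> \<Sigma>"
      using Num_pos_iff[OF fin] D_supp by auto
    then show ?thesis
      using Sigma_sub eq_max_0_iff_slack[of "Num D \<theta>" \<theta>] by (auto simp: Slack_def)
  next
    case False
    then have "\<not> 0 < Num D \<theta>" and "Slack D W \<theta> = 0"
      using Num_pos_iff[OF fin] Slack_unsent by auto
    then show ?thesis
      by (metis order_refl)
  qed
  show ?thesis
    unfolding persuasive_iff_Num_pos[OF agents fin W_nonneg] signal_condition by auto
qed

end
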